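(* Let $m \geq 1$ be an integer. Suppose that $J$ is a $7 \times 7$ Jacobi matrix that realizes perfect state transfer and whose spectrum is $\{0, \pm 1, \pm 2m, \pm (2m+1)\}$. Then $J$ does not exhibit early state exclusion.
   Context: A Jacobi matrix of order $N+1$ is a real symmetric tridiagonal matrix $J$ with diagonal entries $a_1,\dots,a_{N+1}\in\mathbb{R}$ and off-diagonal entries $b_1,\dots,b_N>0$ (so $J_{i,i}=a_i$, $J_{i,i+1}=J_{i+1,i}=b_i$, all other entries zero). Let $\{\mathbf{e}_k\}_{k=0}^{N}$ be the canonical basis of $\mathbb{C}^{N+1}$, with $\mathbf{e}_0=[1,0,\dots,0]^\top$ and $\mathbf{e}_N=[0,\dots,0,1]^\top$, and let $\langle\cdot,\cdot\rangle$ be the standard inner product on $\mathbb{C}^{N+1}$. $J$ realizes perfect state transfer (PST) at time $T>0$ if $e^{-iJT}\mathbf{e}_0 = e^{i\phi}\mathbf{e}_N$ for some $\phi\in\mathbb{R}$; "$J$ realizes PST" means this holds for some $T>0$. If $J$ realizes PST and $T>0$ is the earliest time at which it does, then $J$ exhibits early state exclusion (ESE) at time $\tau$ if $\tau\in(0,T)$ and $\langle e^{-iJ\tau}\mathbf{e}_0,\mathbf{e}_0\rangle = 0$; $J$ exhibits ESE if it does so at some such $\tau$. Here $N+1=7$. *)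

theory Defs
  imports "HOL-Analysis.Analysis"
begin

text \<open>Matrices of order N+1 are functions on indices 0..N (0-based; index 0 is e_0,
 index N is e_N). The Jacobi matrix with diagonal a 0..a N and off-diagonal b 0..b (N-1).\<close>

definition jacobi_mat :: "nat \<Rightarrow> (nat \<Rightarrow> real) \<Rightarrow> (nat \<Rightarrow> real) \<Rightarrow> nat \<Rightarrow> nat \<Rightarrow> real" where
  "jacobi_mat N a b i j =
     (if i \<le> N \<and> j \<le> N then
        (if i = j then a i else if j = i + 1 then b i else if i = j + 1 then b j else 0)
      else 0)"

definition is_jacobi_params :: "nat \<Rightarrow> (nat \<Rightarrow> real) \<Rightarrow> (nat \<Rightarrow> real) \<Rightarrow> bool" where
  "is_jacobi_params N a b \<longleftrightarrow> (\<forall>i<N. b i > 0)"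

definition mvec :: "nat \<Rightarrow> (nat \<Rightarrow> nat \<Rightarrow> real) \<Rightarrow> (nat \<Rightarrow> complex) \<Rightarrow> nat \<Rightarrow> complex" where
  "mvec N M v i = (\<Sum>j\<le>N. complex_of_real (M i j) * v j)"

definition evol :: "nat \<Rightarrow> (nat \<Rightarrow> nat \<Rightarrow> real) \<Rightarrow> real \<Rightarrow> (nat \<Rightarrow> complex) \<Rightarrow> nat \<Rightarrow> complex" where
  "evol N M t v i = (\<Sum>k. ((- \<i> * complex_of_real t) ^ k / of_nat (fact k)) * ((mvec N M ^^ k) v) i)"

definition ebasis :: "nat \<Rightarrow> nat \<Rightarrow> complex" where
  "ebasis k i = (if i = k then 1 else 0)"

definition cinner :: "nat \<Rightarrow> (nat \<Rightarrow> complex) \<Rightarrow> (nat \<Rightarrow> complex) \<Rightarrow> complex" where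
  "cinner N x y = (\<Sum>i\<le>N. x i * cnj (y i))"

definition PST_at :: "nat \<Rightarrow> (nat \<Rightarrow> nat \<Rightarrow> real) \<Rightarrow> real \<Rightarrow> bool" where
  "PST_at N M T \<longleftrightarrow> T > 0 \<and>
     (\<exists>\<phi>::real. \<forall>i\<le>N. evol N M T (ebasis 0) i = exp (\<i> * complex_of_real \<phi>) * ebasis N i)"

definition realizes_PST :: "nat \<Rightarrow> (nat \<Rightarrow> nat \<Rightarrow> real) \<Rightarrow> bool" where
  "realizes_PST N M \<longleftrightarrow> (\<exists>T. PST_at N M T)"

definition exhibits_ESE :: "nat \<Rightarrow> (nat \<Rightarrow> nat \<Rightarrow> real) \<Rightarrow> bool" where
  "exhibits_ESE N M \<longleftrightarrow>
     (\<exists>T \<tau>. PST_at N M T \<and> (\<forall>t. 0 < t \<and> t < T \<longrightarrow> \<not> PST_at N M t) \<and>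
            0 < \<tau> \<and> \<tau> < T \<and> cinner N (evol N M \<tau> (ebasis 0)) (ebasis 0) = 0)"

definition mat_spectrum :: "nat \<Rightarrow> (nat \<Rightarrow> nat \<Rightarrow> real) \<Rightarrow> complex set" where
  "mat_spectrum N M = {\<mu>. \<exists>v. (\<exists>i\<le>N. v i \<noteq> 0) \<and> (\<forall>i\<le>N. mvec N M v i = \<mu> * v i)}"

end

theory Submission
  imports Defs "Jordan_Normal_Form.Determinant"
begin

text \<open>Expand \<open>e\<^sub>0 = \<Sum>\<^sub>k u\<^sub>k\<close> along the eigenvectors of \<open>J\<close>. Because \<open>J\<close> is tridiagonal,
  \<open>(J\<^sup>j e\<^sub>0)\<^sub>N\<close> vanishes for \<open>j < N\<close> and equals \<open>\<Prod>\<^sub>i b\<^sub>i\<close> for \<open>j = N\<close>; Lagrange interpolation turns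
  these moment conditions into \<open>u\<^sub>k(N) \<Prod>\<^sub>l\<^sub>\<noteq>\<^sub>k (\<lambda>\<^sub>k - \<lambda>\<^sub>l) = \<Prod>\<^sub>i b\<^sub>i\<close>. Perfect state transfer at
  time \<open>T\<close> makes every eigenvector mirror symmetric up to sign, which yields the weights
  \<open>u\<^sub>k(0) = \<Prod>\<^sub>i b\<^sub>i / \<bar>\<Prod>\<^sub>l\<^sub>\<noteq>\<^sub>k (\<lambda>\<^sub>k - \<lambda>\<^sub>l)\<bar>\<close> and the phase condition
  \<open>e\<^sup>-\<^sup>i\<^sup>T\<^sup>\<lambda>\<^sup>k = e\<^sup>i\<^sup>\<phi> sgn \<Prod>\<^sub>l\<^sub>\<noteq>\<^sub>k (\<lambda>\<^sub>k - \<lambda>\<^sub>l)\<close>.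

  For the spectrum \<open>{0, \<plusminus>1, \<plusminus>n, \<plusminus>(n + 1)}\<close> with \<open>n = 2m\<close> the signs at \<open>n\<close> and \<open>n + 1\<close> differ,
  so \<open>e\<^sup>-\<^sup>i\<^sup>T = -1\<close>; the spectrum being integral, PST then also happens at time \<open>pi\<close>, so the
  first PST time is at most \<open>pi\<close>. But for \<open>0 < \<tau> < pi\<close> the real part of the return amplitude
  \<open>\<langle>e\<^sup>-\<^sup>i\<^sup>J\<^sup>\<tau> e\<^sub>0, e\<^sub>0\<rangle> = \<Sum>\<^sub>k u\<^sub>k(0) e\<^sup>-\<^sup>i\<^sup>\<tau>\<^sup>\<lambda>\<^sup>k\<close> is a positive multiple of a trigonometric
  polynomial which, after \<open>\<tau> = pi - x\<close>, equals \<open>n (n + 1) G(x)\<close> with \<open>G(x) > 0\<close> on \<open>(0, pi)\<close>.\<close>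

section \<open>A trigonometric inequality\<close>

lemma sin_gt_mult_cos:
  fixes t :: real
  assumes "0 < t" "t \<le> pi"
  shows "t * cos t < sin t"
proof -
  have "(\<lambda>x. sin x - x * cos x) 0 < (\<lambda>x. sin x - x * cos x) t"
  proof (rule DERIV_pos_imp_increasing_open[OF assms(1)])
    fix x :: real assume x: "0 < x" "x < t"
    have "((\<lambda>x. sin x - x * cos x) has_real_derivative x * sin x) (at x)"
      by (auto intro!: derivative_eq_intros simp: algebra_simps)
    moreover have "0 < x * sin x" using x assms by (auto intro!: mult_pos_pos sin_gt_zero)
    ultimately show "\<exists>y. ((\<lambda>x. sin x - x * cos x) has_real_derivative y) (at x) \<and> 0 < y" by blast
  qed (intro continuous_intros)
  then show ?thesis by simp
qed

lemma sin_div_strict_antimono: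
  fixes x y :: real
  assumes "0 < x" "x < y" "y \<le> pi"
  shows "sin y / y < sin x / x"
proof -
  have "(\<lambda>t. sin t / t) y < (\<lambda>t. sin t / t) x"
  proof (rule DERIV_neg_imp_decreasing_open[OF assms(2)])
    fix t :: real assume "x < t" "t < y"
    then have t: "0 < t" "t < pi" using assms by auto
    have "((\<lambda>t. sin t / t) has_real_derivative (t * cos t - sin t) / t^2) (at t)"
      using t by (auto intro!: derivative_eq_intros simp: field_simps power2_eq_square)
    moreover have "(t * cos t - sin t) / t^2 < 0"
      using sin_gt_mult_cos[of t] t by (simp add: divide_neg_pos)
    ultimately show "\<exists>d. ((\<lambda>t. sin t / t) has_real_derivative d) (at t) \<and> d < 0" by blast
  next
    show "continuous_on {x..y} (\<lambda>t. sin t / t)"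
      using assms by (intro continuous_intros) auto
  qed
  then show ?thesis by simp
qed

lemma cos_mult_add_two:
  fixes r x :: real
  shows "cos ((r + 2) * x) = 2 * cos x * cos ((r + 1) * x) - cos (r * x)"
proof -
  have "cos ((r + 1) * x + x) + cos ((r + 1) * x - x) = 2 * cos x * cos ((r + 1) * x)"
    by (simp add: cos_add cos_diff)
  moreover have "(r + 1) * x + x = (r + 2) * x" "(r + 1) * x - x = r * x"
    by (simp_all add: algebra_simps)
  ultimately show ?thesis by simp
qed

lemma sum_cos_mult:
  fixes x :: real
  shows "2 * (1 - cos x) * (\<Sum>j=1..n. cos (real j * x)) =
           cos (real n * x) - cos ((real n + 1) * x) - 1 + cos x"
proof (induction n)
  case (Suc n)
  have "2 * (1 - cos x) * (\<Sum>j=1..Suc n. cos (real j * x)) =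
        cos (real n * x) - cos ((real n + 1) * x) - 1 + cos x
        + 2 * (1 - cos x) * cos ((real n + 1) * x)"
    using Suc by (simp add: algebra_simps)
  also have "\<dots> = cos ((real n + 1) * x) - cos ((real n + 2) * x) - 1 + cos x"
    by (subst cos_mult_add_two) (simp add: algebra_simps)
  finally show ?case by (simp add: algebra_simps)
qed simp

lemma sum_mult_cos_mult:
  fixes x :: real
  shows "2 * (1 - cos x) * (\<Sum>j=1..n. real j * cos (real j * x)) =
           (real n + 1) * cos (real n * x) - real n * cos ((real n + 1) * x) - 1"
proof (induction n)
  case (Suc n)
  have "2 * (1 - cos x) * (\<Sum>j=1..Suc n. real j * cos (real j * x)) =
        (real n + 1) * cos (real n * x) - real n * cos ((real n + 1) * x) - 1
        + 2 * (1 - cos x) * ((real n + 1) * cos ((real n + 1) * x))"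
    using Suc by (simp add: algebra_simps)
  also have "\<dots> = (real n + 2) * cos ((real n + 1) * x) - (real n + 1) * cos ((real n + 2) * x) - 1"
    by (subst cos_mult_add_two) (simp add: algebra_simps)
  finally show ?case by (simp add: algebra_simps)
qed simp

lemma sum_of_nat_real: "(\<Sum>j=1..n. real j) = real n * (real n + 1) / 2"
  by (induction n) (auto simp: field_simps)

lemma sum_of_nat_squares_real: "(\<Sum>j=1..n. real j ^ 2) = real n * (real n + 1) * (2 * real n + 1) / 6"
  by (induction n) (auto simp: field_simps power2_eq_square)

lemma sum_of_nat_cubes_real: "(\<Sum>j=1..n. real j ^ 3) = (real n * (real n + 1) / 2) ^ 2"
  by (induction n) (auto simp: field_simps power2_eq_square power3_eq_cube)

definition G_trig :: "nat \<Rightarrow> real \<Rightarrow> real" where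
  "G_trig a x = real a * (real a + 1) * (2 * real a + 1) * (1 - cos x)
     - (real a + 1) * (real a + 2) * (1 - cos (real a * x))
     + real a * (real a - 1) * (1 - cos ((real a + 1) * x))"

definition G_coeff :: "nat \<Rightarrow> nat \<Rightarrow> real" where
  "G_coeff a j = 3 * real a * (real a + 1) - 2 * (2 * real a + 1) * real j"

lemma sum_G_coeff_squares: "(\<Sum>j=1..a. G_coeff a j * real j ^ 2) = 0"
proof -
  have "(\<lambda>j. G_coeff a j * real j ^ 2) =
        (\<lambda>j. 3 * real a * (real a + 1) * real j ^ 2 - 2 * (2 * real a + 1) * real j ^ 3)"
    by (auto simp: G_coeff_def power2_eq_square power3_eq_cube algebra_simps)
  then have "(\<Sum>j=1..a. G_coeff a j * real j ^ 2) =
        3 * real a * (real a + 1) * (\<Sum>j=1..a. real j ^ 2) - 2 * (2 * real a + 1) * (\<Sum>j=1..a. real j ^ 3)"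
    by (simp only: sum_subtractf sum_distrib_left)
  also have "\<dots> = 0"
    by (simp only: sum_of_nat_squares_real sum_of_nat_cubes_real) (simp add: field_simps power2_eq_square)
  finally show ?thesis .
qed

lemma G_trig_eq_sum:
  "G_trig a x = 2 * (1 - cos x) * (\<Sum>j=1..a. G_coeff a j * (1 - cos (real j * x)))"
proof -
  define A where "A = real a"
  define S where "S = (\<Sum>j=1..a. G_coeff a j * (1 - cos (real j * x)))"
  define C where "C = (\<Sum>j=1..a. cos (real j * x))"
  define JC where "JC = (\<Sum>j=1..a. real j * cos (real j * x))"
  have "(\<lambda>j. G_coeff a j * (1 - cos (real j * x))) = (\<lambda>j. 3 * A * (A + 1) - 2 * (2 * A + 1) * real j
        - 3 * A * (A + 1) * cos (real j * x) + 2 * (2 * A + 1) * (real j * cos (real j * x)))"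
    by (auto simp: G_coeff_def A_def algebra_simps)
  then have S: "S = 3 * A * (A + 1) * A - (2 * A + 1) * A * (A + 1) - 3 * A * (A + 1) * C
        + 2 * (2 * A + 1) * JC"
    unfolding S_def C_def JC_def A_def
    by (simp only: sum_subtractf sum.distrib sum_distrib_left[symmetric] sum_of_nat_real) (simp add: field_simps)
  have "2 * (1 - cos x) * S = 2 * (1 - cos x) * (3 * A * (A + 1) * A - (2 * A + 1) * A * (A + 1))
        - 3 * A * (A + 1) * (2 * (1 - cos x) * C) + 2 * (2 * A + 1) * (2 * (1 - cos x) * JC)"
    unfolding S by (simp add: algebra_simps)
  also have "\<dots> = G_trig a x"
    unfolding C_def JC_def sum_cos_mult sum_mult_cos_mult G_trig_def A_def
    by (simp add: algebra_simps)
  finally show ?thesis unfolding S_def ..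
qed

lemma sin_mult_sq_lt:
  assumes "1 \<le> i" "i < j" "real j * t \<le> pi" "0 < t"
  shows "real i ^ 2 * sin (real j * t) ^ 2 < real j ^ 2 * sin (real i * t) ^ 2"
proof -
  have it: "0 < real i * t" "real i * t < real j * t" using assms by simp_all
  then have "sin (real j * t) / (real j * t) < sin (real i * t) / (real i * t)"
    using sin_div_strict_antimono assms(3) by blast
  then have "real i * sin (real j * t) * t < real j * sin (real i * t) * t"
    using it assms(4) by (simp add: field_simps)
  then have "real i * sin (real j * t) < real j * sin (real i * t)"
    using assms(4) by simp
  moreover have "0 \<le> real i * sin (real j * t)" using assms it by (intro mult_nonneg_nonneg sin_ge_zero) auto
  ultimately have "(real i * sin (real j * t)) ^ 2 < (real j * sin (real i * t)) ^ 2"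
    by (intro power_strict_mono) auto
  then show ?thesis by (simp add: power_mult_distrib)
qed

lemma G_coeff_pair_nonneg:
  assumes "1 \<le> i" "i \<le> a" "1 \<le> j" "j \<le> a" "real a * t \<le> pi" "0 < t"
  shows "0 \<le> (G_coeff a i - G_coeff a j) * (real j ^ 2 * sin (real i * t) ^ 2 - real i ^ 2 * sin (real j * t) ^ 2)"
proof -
  have diff: "G_coeff a i - G_coeff a j = 2 * (2 * real a + 1) * (real j - real i)"
    by (simp add: G_coeff_def algebra_simps)
  have le: "real i * t \<le> real a * t" "real j * t \<le> real a * t" using assms by simp_all
  consider "i < j" | "i = j" | "j < i" by linarith
  then show ?thesis
  proof cases
    case 1
    then show ?thesis using sin_mult_sq_lt[of i j t] assms le unfolding diff
      by (intro mult_nonneg_nonneg) auto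
  next
    case 3
    then have "2 * (2 * real a + 1) * (real j - real i) \<le> 0" by (simp add: mult_nonneg_nonpos)
    then show ?thesis using sin_mult_sq_lt[of j i t] 3 assms le unfolding diff
      by (rule_tac mult_nonpos_nonpos) auto
  qed simp
qed

text \<open>The coefficients decrease in \<open>j\<close> while \<open>sin (j t)\<^sup>2 / j\<^sup>2\<close> strictly decreases, so
  every term of the double sum below is nonnegative (Chebyshev's sum inequality); since
  \<open>\<Sum>j. G_coeff a j * j\<^sup>2 = 0\<close>, the double sum is \<open>2 (\<Sum>j. j\<^sup>2) (\<Sum>j. G_coeff a j * sin (j t)\<^sup>2)\<close>.\<close>

lemma sum_G_coeff_sin_sq_pos:
  assumes "2 \<le> a" "real a * t \<le> pi" "0 < t"
  shows "0 < (\<Sum>j=1..a. G_coeff a j * sin (real j * t) ^ 2)"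
proof -
  define s where "s j = sin (real j * t) ^ 2" for j
  define T where "T i j = (G_coeff a i - G_coeff a j) * (real j ^ 2 * s i - real i ^ 2 * s j)" for i j
  have T_nonneg: "0 \<le> T i j" if "i \<in> {1..a}" "j \<in> {1..a}" for i j
    using G_coeff_pair_nonneg[of i a j t] that assms unfolding T_def s_def by auto
  have "G_coeff a 1 - G_coeff a a = 2 * (2 * real a + 1) * (real a - 1)"
    by (simp add: G_coeff_def algebra_simps)
  then have "0 < T 1 a"
    using sin_mult_sq_lt[of 1 a t] assms unfolding T_def s_def by (intro mult_pos_pos) auto
  then have "0 < (\<Sum>j=1..a. T 1 j)"
    using assms T_nonneg by (intro sum_pos2[of _ a]) auto
  then have "0 < (\<Sum>i=1..a. \<Sum>j=1..a. T i j)"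
    using assms T_nonneg by (rule_tac sum_pos2[of _ 1]) (auto intro!: sum_nonneg)
  also have "T i j = (G_coeff a i * s i) * real j ^ 2 - (G_coeff a i * real i ^ 2) * s j
      - s i * (G_coeff a j * real j ^ 2) + real i ^ 2 * (G_coeff a j * s j)" for i j
    unfolding T_def by (simp add: algebra_simps)
  then have "(\<Sum>i=1..a. \<Sum>j=1..a. T i j) =
      2 * (\<Sum>j=1..a. real j ^ 2) * (\<Sum>j=1..a. G_coeff a j * s j)
      - 2 * (\<Sum>j=1..a. G_coeff a j * real j ^ 2) * (\<Sum>j=1..a. s j)"
    by (simp only: sum_subtractf sum.distrib sum_product[symmetric]) (simp add: algebra_simps)
  finally have "0 < (\<Sum>j=1..a. real j ^ 2) * (\<Sum>j=1..a. G_coeff a j * s j)"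
    unfolding sum_G_coeff_squares by (simp add: mult.commute)
  moreover have "0 < (\<Sum>j=1..a. real j ^ 2)" using assms by (intro sum_pos2[of _ 1]) auto
  ultimately show ?thesis unfolding s_def by (simp add: zero_less_mult_iff)
qed

lemma G_trig_double:
  fixes a :: nat and t :: real
  defines "A \<equiv> real a"
  shows "G_trig a (2 * t) = 4 * (A^2 * (A + 2) * sin t ^ 2 - (2 * A + 1) * sin (A * t) ^ 2
           + A * (A - 1) * sin (A * t) * sin t * cos ((A + 1) * t))"
proof -
  define S C u v where "S = sin t" "C = cos t" "u = sin (A * t)" "v = cos (A * t)"
  have double: "cos (2 * t) = 1 - 2 * S^2" "cos (A * (2 * t)) = 1 - 2 * u^2"
    "cos ((A + 1) * (2 * t)) = 1 - 2 * (u * C + v * S)^2"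
    using cos_double_sin[of t] cos_double_sin[of "A * t"] cos_double_sin[of "(A + 1) * t"]
    unfolding S_C_u_v_def by (simp_all add: mult.left_commute distrib_right sin_add)
  have "cos ((A + 1) * t) = v * C - u * S"
    unfolding S_C_u_v_def by (simp add: distrib_right cos_add)
  moreover have "A * (A + 1) * (2 * A + 1) * (2 * S^2) - (A + 1) * (A + 2) * (2 * u^2)
      + A * (A - 1) * (2 * (u * C + v * S)^2)
      - 4 * (A^2 * (A + 2) * S^2 - (2 * A + 1) * u^2 + A * (A - 1) * u * S * (v * C - u * S))
    = 2 * A * (A - 1) * (u^2 * (S^2 + C^2 - 1) + S^2 * (u^2 + v^2 - 1))"
    by (simp add: algebra_simps power2_eq_square)
  moreover have "S^2 + C^2 = 1" "u^2 + v^2 = 1" unfolding S_C_u_v_def by simp_all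
  ultimately show ?thesis
    unfolding G_trig_def A_def[symmetric] double by (simp add: S_C_u_v_def)
qed

text \<open>For \<open>a t \<ge> pi\<close> the bound \<open>sin t > 2 t / pi \<ge> 2 / a\<close> makes \<open>a sin t / 2\<close> dominate
  both \<open>sin (a t)\<close> and \<open>sin (a t) cos ((a + 1) t)\<close>; what remains is \<open>9/4 a\<^sup>2 sin\<^sup>2 t\<close>.\<close>

lemma G_trig_double_pos:
  assumes "2 \<le> a" "pi \<le> real a * t" "t < pi / 2"
  shows "0 < G_trig a (2 * t)"
proof -
  define A S u c where "A = real a" "S = sin t" "u = sin (A * t)" "c = cos ((A + 1) * t)"
  have A: "2 \<le> A" using assms(1) unfolding A_S_u_c_def by simp
  have t: "0 < t" using assms(2) A pi_gt_zero unfolding A_S_u_c_def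
    by (metis mult_nonneg_nonpos not_le of_nat_0_le_iff order.trans not_less)
  have "sin (pi / 2) / (pi / 2) < sin t / t" by (rule sin_div_strict_antimono) (use assms t in auto)
  then have "2 * t / pi < S" using t unfolding A_S_u_c_def by (simp add: field_simps)
  moreover have "2 / A \<le> 2 * t / pi" using assms A unfolding A_S_u_c_def by (simp add: field_simps)
  ultimately have "2 / A < S" by linarith
  moreover have "0 < 2 / A" using A by simp
  ultimately have SA: "1 < A * S / 2" "0 < S" using A by (simp add: field_simps, linarith)
  have u: "\<bar>u\<bar> \<le> A * S / 2" using abs_sin_le_one[of "A * t"] SA unfolding A_S_u_c_def by linarith
  then have "u^2 \<le> (A * S / 2)^2" using power_mono[OF u abs_ge_zero, of 2] by simp
  then have sq: "(2 * A + 1) * u^2 \<le> (2 * A + 1) * (A * S / 2)^2" using A by (intro mult_left_mono) auto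
  have "\<bar>u * c\<bar> \<le> \<bar>u\<bar>" unfolding A_S_u_c_def by (simp add: abs_mult mult_left_le)
  then have "A * (A - 1) * S * (- (A * S / 2)) \<le> A * (A - 1) * S * (u * c)"
    using u A SA by (intro mult_left_mono) auto
  then have "9 / 4 * A^2 * S^2 \<le> A^2 * (A + 2) * S ^ 2 - (2 * A + 1) * u^2 + A * (A - 1) * S * (u * c)"
    using sq by (simp add: field_simps power2_eq_square)
  moreover have "0 < 9 / 4 * A^2 * S^2" using A SA by simp
  ultimately show ?thesis
    unfolding G_trig_double A_S_u_c_def by (simp add: algebra_simps)
qed

lemma G_trig_pos:
  assumes "2 \<le> a" "0 < x" "x < pi"
  shows "0 < G_trig a x"
proof -
  define t where "t = x / 2"
  have x: "x = 2 * t" and t: "0 < t" "t < pi / 2" using assms unfolding t_def by auto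
  show ?thesis
  proof (cases "real a * t \<le> pi")
    case True
    have half: "1 - cos (real j * x) = 2 * sin (real j * t) ^ 2" for j
      unfolding x using cos_double_sin[of "real j * t"] by (simp add: mult.left_commute)
    have "G_trig a x = 4 * (1 - cos x) * (\<Sum>j=1..a. G_coeff a j * sin (real j * t) ^ 2)"
      unfolding G_trig_eq_sum half by (simp add: sum_distrib_left algebra_simps)
    moreover have "0 < 1 - cos x"
      using sin_gt_zero[of t] t unfolding x cos_double_sin by simp
    ultimately show ?thesis
      using sum_G_coeff_sin_sq_pos[of a t] True assms t by simp
  next
    case False
    then show ?thesis unfolding x using G_trig_double_pos assms t by simp
  qed
qed

text \<open>Substituting \<open>x = pi - \<tau>\<close> turns the left-hand side into \<open>a (a + 1) G_trig a x\<close>,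
  because \<open>a\<close> is even and \<open>a + 1\<close> is odd.\<close>

lemma even_cos_poly_pos:
  fixes a :: nat and \<tau> :: real
  assumes "even a" "2 \<le> a" "0 < \<tau>" "\<tau> < pi"
  defines "A \<equiv> real a" and "B \<equiv> real a + 1"
  shows "0 < (A^2 - 1) * (B^2 - 1) * (B^2 - A^2) + A^2 * B^2 * (B^2 - A^2) * cos \<tau>
              + B^2 * (B^2 - 1) * cos (A * \<tau>) + A^2 * (A^2 - 1) * cos (B * \<tau>)"
proof -
  define x where "x = pi - \<tau>"
  obtain k where k: "a = 2 * k" using assms(1) by blast
  have "cos (A * \<tau>) = cos (real (2 * k) * pi - A * x)" unfolding x_def A_def k by (simp add: algebra_simps)
  then have cA: "cos (A * \<tau>) = cos (A * x)" by (simp add: cos_diff del: of_nat_mult)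
  have "cos (B * \<tau>) = cos (real (2 * k + 1) * pi - B * x)" unfolding x_def B_def k by (simp add: algebra_simps)
  then have cB: "cos (B * \<tau>) = - cos (B * x)" by (simp only: cos_diff sin_npi cos_npi) simp
  have c1: "cos \<tau> = - cos x" unfolding x_def by simp
  have BA: "B = A + 1" unfolding A_def B_def ..
  have G: "G_trig a x = A * (A + 1) * (2 * A + 1) * (1 - cos x) - (A + 1) * (A + 2) * (1 - cos (A * x))
     + A * (A - 1) * (1 - cos (B * x))"
    unfolding G_trig_def A_def B_def ..
  have "(A^2 - 1) * (B^2 - 1) * (B^2 - A^2) + A^2 * B^2 * (B^2 - A^2) * cos \<tau>
              + B^2 * (B^2 - 1) * cos (A * \<tau>) + A^2 * (A^2 - 1) * cos (B * \<tau>) = A * B * G_trig a x"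
    unfolding G c1 cA cB by (simp add: BA algebra_simps power2_eq_square)
  moreover have "0 < G_trig a x" using G_trig_pos assms unfolding x_def by simp
  moreover have "0 < A * B" using assms(2) unfolding A_def B_def by simp
  ultimately show ?thesis by simp
qed

section \<open>Jacobi matrices with simple spectrum\<close>

definition rmvec :: "nat \<Rightarrow> (nat \<Rightarrow> nat \<Rightarrow> real) \<Rightarrow> (nat \<Rightarrow> real) \<Rightarrow> nat \<Rightarrow> real" where
  "rmvec N M v i = (\<Sum>j\<le>N. M i j * v j)"

lemma real_eigenvector_exists:
  assumes "complex_of_real \<mu> \<in> mat_spectrum N M"
  shows "\<exists>v. (\<exists>i\<le>N. v i \<noteq> 0) \<and> (\<forall>i\<le>N. rmvec N M v i = \<mu> * v i)"
proof -
  obtain w where w: "\<exists>i\<le>N. w i \<noteq> 0" "\<forall>i\<le>N. mvec N M w i = complex_of_real \<mu> * w i"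
    using assms unfolding mat_spectrum_def by auto
  have Re: "rmvec N M (\<lambda>j. Re (w j)) i = \<mu> * Re (w i)"
   and Im: "rmvec N M (\<lambda>j. Im (w j)) i = \<mu> * Im (w i)" if "i \<le> N" for i
    using arg_cong[OF w(2)[rule_format, OF that], of Re] arg_cong[OF w(2)[rule_format, OF that], of Im]
    unfolding mvec_def rmvec_def Re_sum Im_sum by simp_all
  from w(1) consider "\<exists>i\<le>N. Re (w i) \<noteq> 0" | "\<exists>i\<le>N. Im (w i) \<noteq> 0"
    by (auto simp: complex_eq_iff)
  then show ?thesis
  proof cases
    case 1
    then show ?thesis using Re by (intro exI[of _ "\<lambda>j. Re (w j)"]) simp
  next
    case 2
    then show ?thesis using Im by (intro exI[of _ "\<lambda>j. Im (w j)"]) simp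
  qed
qed

lemma symmetric_eigenvectors_orthogonal:
  assumes "\<And>i j. M i j = M j i"
    and "\<And>i. i \<le> N \<Longrightarrow> rmvec N M v i = \<kappa> * v i" "\<And>i. i \<le> N \<Longrightarrow> rmvec N M w i = \<mu> * w i"
    and "\<kappa> \<noteq> \<mu>"
  shows "(\<Sum>i\<le>N. v i * w i) = 0"
proof -
  have "\<kappa> * (\<Sum>i\<le>N. v i * w i) = (\<Sum>i\<le>N. rmvec N M v i * w i)"
    using assms(2) by (simp add: sum_distrib_left algebra_simps)
  also have "\<dots> = (\<Sum>j\<le>N. \<Sum>i\<le>N. M i j * v j * w i)"
    unfolding rmvec_def sum_distrib_right by (subst sum.swap) simp
  also have "\<dots> = (\<Sum>j\<le>N. v j * rmvec N M w j)"
    by (simp add: rmvec_def sum_distrib_left algebra_simps assms(1))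
  also have "\<dots> = \<mu> * (\<Sum>i\<le>N. v i * w i)"
    using assms(3) by (simp add: sum_distrib_left algebra_simps)
  finally show ?thesis using assms(4) by simp
qed

text \<open>A left inverse of the square matrix with columns \<open>V k\<close> is also a right inverse.\<close>

lemma orthogonal_family_complete:
  fixes V :: "nat \<Rightarrow> nat \<Rightarrow> real"
  assumes orth: "\<And>k l. k \<le> N \<Longrightarrow> l \<le> N \<Longrightarrow> k \<noteq> l \<Longrightarrow> (\<Sum>i\<le>N. V k i * V l i) = 0"
    and nonzero: "\<And>k. k \<le> N \<Longrightarrow> (\<Sum>i\<le>N. V k i * V k i) \<noteq> 0"
    and "i \<le> N" "j \<le> N"
  shows "(\<Sum>k\<le>N. V k i * V k j / (\<Sum>l\<le>N. V k l * V k l)) = (if i = j then 1 else 0)"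
proof -
  define nrm where "nrm k = (\<Sum>l\<le>N. V k l * V k l)" for k
  define A where "A = Matrix.mat (Suc N) (Suc N) (\<lambda>(i, k). V k i)"
  define B where "B = Matrix.mat (Suc N) (Suc N) (\<lambda>(k, j). V k j / nrm k)"
  have A: "A \<in> carrier_mat (Suc N) (Suc N)" and B: "B \<in> carrier_mat (Suc N) (Suc N)"
    unfolding A_def B_def by auto
  have idx: "{0..<Suc N} = {..N}" by auto
  have "B * A = 1\<^sub>m (Suc N)"
  proof (rule eq_matI)
    fix k l assume "k < dim_row (1\<^sub>m (Suc N) :: real Matrix.mat)" "l < dim_col (1\<^sub>m (Suc N) :: real Matrix.mat)"
    then have k: "k \<le> N" and l: "l \<le> N" by auto
    have "(B * A) $$ (k, l) = (\<Sum>i\<le>N. V k i * V l i) / nrm k"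
      using k l unfolding A_def B_def by (simp add: scalar_prod_def idx sum_divide_distrib algebra_simps)
    then show "(B * A) $$ (k, l) = 1\<^sub>m (Suc N) $$ (k, l)"
      using orth[OF k l] nonzero[OF k] k l unfolding nrm_def by auto
  qed (auto simp: A_def B_def)
  then have "A * B = 1\<^sub>m (Suc N)" by (rule mat_mult_left_right_inverse[OF B A])
  then have "(A * B) $$ (i, j) = (if i = j then 1 else 0)" using assms(3,4) by auto
  then show ?thesis
    using assms(3,4) unfolding A_def B_def nrm_def by (simp add: scalar_prod_def idx)
qed

lemma jacobi_mat_sym: "jacobi_mat N a b i j = jacobi_mat N a b j i"
  unfolding jacobi_mat_def by auto

lemma cinner_ebasis: "k \<le> N \<Longrightarrow> cinner N x (ebasis k) = x k"
  unfolding cinner_def ebasis_def by (simp add: if_distrib[of cnj] if_distrib[of "(*) _"] cong: if_cong)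

lemma exp_complex_sums: "(\<lambda>n. z ^ n / of_nat (fact n)) sums exp (z :: complex)"
  using exp_converges[of z] by (simp add: scaleR_conv_of_real divide_inverse mult.commute)

lemma cis_int_mult_cong:
  assumes "cis s = cis t" "x \<in> \<int>"
  shows "cis (s * x) = cis (t * x)"
proof -
  obtain n where "x = of_int n" using assms(2) by (auto elim: Ints_cases)
  then show ?thesis using cis_power_int[of s n] cis_power_int[of t n] assms(1) by (simp add: mult.commute)
qed

lemma jacobi_mat_eq_zero:
  assumes "j + 1 < i \<or> i + 1 < j"
  shows "jacobi_mat N a b i j = 0"
  using assms unfolding jacobi_mat_def by auto

lemma jacobi_power_ebasis0:
  fixes N :: nat and a b :: "nat \<Rightarrow> real"
  defines "X k \<equiv> (mvec N (jacobi_mat N a b) ^^ k) (ebasis 0)"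
  assumes "n \<le> N"
  shows "\<And>i. n < i \<Longrightarrow> X n i = 0" and "X n n = complex_of_real (\<Prod>i<n. b i)"
proof -
  have "(\<forall>i. n < i \<longrightarrow> X n i = 0) \<and> X n n = complex_of_real (\<Prod>i<n. b i)"
    using assms(2)
  proof (induction n)
    case 0
    then show ?case by (simp add: X_def ebasis_def)
  next
    case (Suc n)
    then have zero: "X n j = 0" if "n < j" for j using that by simp
    have diag: "X n n = complex_of_real (\<Prod>i<n. b i)" using Suc by simp
    have step: "X (Suc n) i = (\<Sum>j\<le>N. complex_of_real (jacobi_mat N a b i j) * X n j)" for i
      by (simp add: X_def mvec_def)
    have "X (Suc n) i = 0" if "Suc n < i" for i
    proof -
      have "complex_of_real (jacobi_mat N a b i j) * X n j = 0" for j
        using zero[of j] jacobi_mat_eq_zero[of j i] that by (cases "n < j") auto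
      then show ?thesis unfolding step by (intro sum.neutral) blast
    qed
    moreover have "X (Suc n) (Suc n) = complex_of_real (jacobi_mat N a b (Suc n) n) * X n n
        + (\<Sum>j\<in>{..N} - {n}. complex_of_real (jacobi_mat N a b (Suc n) j) * X n j)"
      unfolding step using Suc.prems by (intro sum.remove) auto
    moreover have "(\<Sum>j\<in>{..N} - {n}. complex_of_real (jacobi_mat N a b (Suc n) j) * X n j) = 0"
    proof (intro sum.neutral ballI)
      fix j assume "j \<in> {..N} - {n}"
      then show "complex_of_real (jacobi_mat N a b (Suc n) j) * X n j = 0"
        using zero[of j] jacobi_mat_eq_zero[of j "Suc n"] by (cases "n < j") auto
    qed
    ultimately show ?case using Suc.prems diag by (auto simp: jacobi_mat_def mult.commute)
  qed
  then show "\<And>i. n < i \<Longrightarrow> X n i = 0" and "X n n = complex_of_real (\<Prod>i<n. b i)" by auto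
qed

lemma eq_sgn_mult_if_abs_eq:
  fixes x y g :: real
  assumes "\<bar>y\<bar> = \<bar>x\<bar>" "0 < x * y * g"
  shows "y = sgn g * x"
  using assms by (auto simp: abs_if sgn_if zero_less_mult_iff split: if_splits)

locale jacobi_simple_spectrum =
  fixes N :: nat and a b lam :: "nat \<Rightarrow> real"
  assumes offdiag_pos: "\<And>i. i < N \<Longrightarrow> 0 < b i"
    and eigenvalues_inj: "inj_on lam {..N}"
    and eigenvalues: "\<And>k. k \<le> N \<Longrightarrow> complex_of_real (lam k) \<in> mat_spectrum N (jacobi_mat N a b)"
begin

abbreviation J :: "nat \<Rightarrow> nat \<Rightarrow> real" where "J \<equiv> jacobi_mat N a b"

definition eigvec :: "nat \<Rightarrow> nat \<Rightarrow> real" where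
  "eigvec k = (SOME v. (\<exists>i\<le>N. v i \<noteq> 0) \<and> (\<forall>i\<le>N. rmvec N J v i = lam k * v i))"

lemma eigvec_spec:
  assumes "k \<le> N"
  shows "(\<exists>i\<le>N. eigvec k i \<noteq> 0) \<and> (\<forall>i\<le>N. rmvec N J (eigvec k) i = lam k * eigvec k i)"
  using someI_ex[OF real_eigenvector_exists[OF eigenvalues[OF assms]]] unfolding eigvec_def .

lemma eigvec_nonzero: "k \<le> N \<Longrightarrow> \<exists>i\<le>N. eigvec k i \<noteq> 0"
  using eigvec_spec by simp

lemma eigvec_eigen: "k \<le> N \<Longrightarrow> i \<le> N \<Longrightarrow> rmvec N J (eigvec k) i = lam k * eigvec k i"
  using eigvec_spec by simp

definition eigvec_sqnorm :: "nat \<Rightarrow> real" where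
  "eigvec_sqnorm k = (\<Sum>i\<le>N. eigvec k i * eigvec k i)"

lemma eigvec_sqnorm_pos: "k \<le> N \<Longrightarrow> 0 < eigvec_sqnorm k"
proof -
  assume "k \<le> N"
  then obtain i where "i \<le> N" "eigvec k i \<noteq> 0" using eigvec_nonzero by blast
  then show ?thesis unfolding eigvec_sqnorm_def
    by (intro sum_pos2[of _ i]) (auto simp: zero_less_mult_iff linorder_neq_iff)
qed

lemma eigvec_orthogonal:
  "k \<le> N \<Longrightarrow> l \<le> N \<Longrightarrow> k \<noteq> l \<Longrightarrow> (\<Sum>i\<le>N. eigvec k i * eigvec l i) = 0"
proof (rule symmetric_eigenvectors_orthogonal[OF jacobi_mat_sym])
  assume kl: "k \<le> N" "l \<le> N" "k \<noteq> l"
  show "rmvec N J (eigvec k) i = lam k * eigvec k i" "rmvec N J (eigvec l) i = lam l * eigvec l i"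
    if "i \<le> N" for i
    using eigvec_eigen kl that by blast+
  show "lam k \<noteq> lam l" using inj_onD[OF eigenvalues_inj] kl by blast
qed

text \<open>\<open>spec_part k\<close> is the orthogonal projection of \<open>e\<^sub>0\<close> onto the \<open>k\<close>-th eigenline.\<close>

definition spec_part :: "nat \<Rightarrow> nat \<Rightarrow> real" where
  "spec_part k i = eigvec k 0 / eigvec_sqnorm k * eigvec k i"

lemma sum_spec_part: "i \<le> N \<Longrightarrow> (\<Sum>k\<le>N. spec_part k i) = (if i = 0 then 1 else 0)"
proof -
  assume i: "i \<le> N"
  have "(\<Sum>i\<le>N. eigvec k i * eigvec k i) \<noteq> 0" if "k \<le> N" for k
    using eigvec_sqnorm_pos[OF that] unfolding eigvec_sqnorm_def by simp
  then have "(\<Sum>k\<le>N. eigvec k i * eigvec k 0 / (\<Sum>l\<le>N. eigvec k l * eigvec k l)) = (if i = 0 then 1 else 0)"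
    using orthogonal_family_complete[OF eigvec_orthogonal _ i, where j = 0] by simp
  then show ?thesis unfolding spec_part_def eigvec_sqnorm_def by (simp add: algebra_simps)
qed

lemma spec_part_eigen: "k \<le> N \<Longrightarrow> i \<le> N \<Longrightarrow> rmvec N J (spec_part k) i = lam k * spec_part k i"
proof -
  assume "k \<le> N" "i \<le> N"
  have "rmvec N J (spec_part k) i = eigvec k 0 / eigvec_sqnorm k * rmvec N J (eigvec k) i"
    unfolding rmvec_def spec_part_def by (simp add: sum_distrib_left algebra_simps)
  then show ?thesis using eigvec_eigen \<open>k \<le> N\<close> \<open>i \<le> N\<close> unfolding spec_part_def by simp
qed

lemma mvec_power_ebasis0:
  "i \<le> N \<Longrightarrow> (mvec N J ^^ n) (ebasis 0) i = complex_of_real (\<Sum>k\<le>N. lam k ^ n * spec_part k i)"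
proof (induction n arbitrary: i)
  case 0
  then show ?case using sum_spec_part[of i] by (simp add: ebasis_def)
next
  case (Suc n)
  have "(mvec N J ^^ Suc n) (ebasis 0) i = (\<Sum>j\<le>N. complex_of_real (J i j) * (mvec N J ^^ n) (ebasis 0) j)"
    by (simp add: mvec_def)
  also have "\<dots> = complex_of_real (\<Sum>j\<le>N. J i j * (\<Sum>k\<le>N. lam k ^ n * spec_part k j))"
    using Suc.IH by simp
  also have "(\<Sum>j\<le>N. J i j * (\<Sum>k\<le>N. lam k ^ n * spec_part k j)) = (\<Sum>k\<le>N. lam k ^ n * rmvec N J (spec_part k) i)"
    unfolding rmvec_def sum_distrib_left by (subst sum.swap) (simp add: algebra_simps)
  also have "\<dots> = (\<Sum>k\<le>N. lam k ^ Suc n * spec_part k i)"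
    using Suc.prems by (intro sum.cong) (auto simp: spec_part_eigen)
  finally show ?case .
qed

lemma evol_ebasis0:
  "i \<le> N \<Longrightarrow> evol N J t (ebasis 0) i = (\<Sum>k\<le>N. complex_of_real (spec_part k i) * cis (- (t * lam k)))"
proof -
  assume i: "i \<le> N"
  have "(\<lambda>n. \<Sum>k\<le>N. complex_of_real (spec_part k i) * ((- \<i> * complex_of_real (t * lam k)) ^ n / of_nat (fact n)))
     sums (\<Sum>k\<le>N. complex_of_real (spec_part k i) * exp (- \<i> * complex_of_real (t * lam k)))"
    by (intro sums_sum sums_mult exp_complex_sums)
  moreover have "((- \<i> * complex_of_real t) ^ n / of_nat (fact n)) * ((mvec N J ^^ n) (ebasis 0)) i
      = (\<Sum>k\<le>N. complex_of_real (spec_part k i) * ((- \<i> * complex_of_real (t * lam k)) ^ n / of_nat (fact n)))" for n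
    unfolding mvec_power_ebasis0[OF i] power_mult_distrib by (simp add: sum_distrib_left algebra_simps)
  ultimately show ?thesis
    unfolding evol_def cis_conv_exp by (simp add: sums_iff)
qed

definition offdiag_prod :: real where
  "offdiag_prod = (\<Prod>i<N. b i)"

lemma offdiag_prod_pos: "0 < offdiag_prod"
  unfolding offdiag_prod_def by (rule prod_pos) (use offdiag_pos in auto)

lemma moments_spec_part_last:
  assumes "n \<le> N"
  shows "(\<Sum>k\<le>N. lam k ^ n * spec_part k N) = (if n = N then offdiag_prod else 0)"
proof -
  have "complex_of_real (\<Sum>k\<le>N. lam k ^ n * spec_part k N) = (mvec N J ^^ n) (ebasis 0) N"
    using mvec_power_ebasis0[of N n] by simp
  also have "\<dots> = complex_of_real (if n = N then offdiag_prod else 0)"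
    using jacobi_power_ebasis0[OF assms, where a = a and b = b] assms unfolding offdiag_prod_def
    by (cases "n = N") auto
  finally show ?thesis by (simp only: of_real_eq_iff)
qed

definition eigval_gap :: "nat \<Rightarrow> real" where
  "eigval_gap k = (\<Prod>l\<in>{..N} - {k}. lam k - lam l)"

text \<open>Lagrange interpolation: pairing the moments with the coefficients of
  \<open>\<Prod>l \<noteq> k. (x - lam l)\<close>, which has degree \<open>N\<close> and vanishes at every eigenvalue except \<open>lam k\<close>.\<close>

lemma spec_part_last_mult_gap:
  assumes k: "k \<le> N"
  shows "spec_part k N * eigval_gap k = offdiag_prod"
proof -
  define S where "S = {..N} - {k}"
  define q where "q = (\<Prod>l\<in>S. [:- lam l, 1:])"
  have deg: "degree q = N" unfolding q_def
    by (subst degree_prod_sum_eq) (use k in \<open>auto simp: S_def\<close>)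
  have lead: "coeff q N = 1"
    using deg lead_coeff_prod[of "\<lambda>l. [:- lam l, 1:]" S] unfolding q_def by simp
  have poly_q: "poly q x = (\<Prod>l\<in>S. x - lam l)" for x
    unfolding q_def poly_prod by simp
  have "(\<Sum>l\<le>N. poly q (lam l) * spec_part l N) = (\<Sum>l\<le>N. \<Sum>n\<le>N. coeff q n * (lam l ^ n * spec_part l N))"
    unfolding poly_altdef deg by (simp add: sum_distrib_right mult.assoc)
  also have "\<dots> = (\<Sum>n\<le>N. coeff q n * (\<Sum>l\<le>N. lam l ^ n * spec_part l N))"
    by (subst sum.swap) (simp add: sum_distrib_left)
  also have "\<dots> = offdiag_prod"
    using lead by (simp add: moments_spec_part_last if_distrib[of "(*) _"] cong: if_cong)
  finally have "(\<Sum>l\<le>N. poly q (lam l) * spec_part l N) = offdiag_prod" .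
  moreover have "(\<Sum>l\<le>N. poly q (lam l) * spec_part l N) = poly q (lam k) * spec_part k N
      + (\<Sum>l\<in>{..N} - {k}. poly q (lam l) * spec_part l N)"
    using k by (intro sum.remove) auto
  moreover have "(\<Sum>l\<in>{..N} - {k}. poly q (lam l) * spec_part l N) = 0"
    by (intro sum.neutral) (auto simp: poly_q S_def)
  ultimately show ?thesis unfolding poly_q S_def eigval_gap_def by (simp add: mult.commute)
qed

lemma sum_spec_part_mult_eigvec:
  assumes "k \<le> N" "l \<le> N"
  shows "(\<Sum>i\<le>N. spec_part k i * eigvec l i) = (if k = l then eigvec l 0 else 0)"
proof -
  have "(\<Sum>i\<le>N. spec_part k i * eigvec l i) = eigvec k 0 / eigvec_sqnorm k * (\<Sum>i\<le>N. eigvec k i * eigvec l i)"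
    unfolding spec_part_def by (simp add: sum_distrib_left algebra_simps)
  then show ?thesis
    using eigvec_orthogonal[OF assms] eigvec_sqnorm_pos[OF assms(1)] unfolding eigvec_sqnorm_def by auto
qed

lemma PST_at_eigvec:
  assumes "PST_at N J T"
  shows "\<exists>\<phi>. \<forall>l\<le>N. cis (- (T * lam l)) * eigvec l 0 = exp (\<i> * complex_of_real \<phi>) * eigvec l N"
proof -
  obtain \<phi> where \<phi>: "\<And>i. i \<le> N \<Longrightarrow> evol N J T (ebasis 0) i = exp (\<i> * complex_of_real \<phi>) * ebasis N i"
    using assms unfolding PST_at_def by blast
  have "cis (- (T * lam l)) * eigvec l 0 = exp (\<i> * complex_of_real \<phi>) * eigvec l N" if l: "l \<le> N" for l
  proof -
    have "exp (\<i> * complex_of_real \<phi>) * eigvec l N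
        = (\<Sum>i\<le>N. if i = N then exp (\<i> * complex_of_real \<phi>) * eigvec l N else 0)"
      by simp
    also have "\<dots> = (\<Sum>i\<le>N. evol N J T (ebasis 0) i * eigvec l i)"
      by (intro sum.cong) (auto simp: \<phi> ebasis_def)
    also have "\<dots> = (\<Sum>i\<le>N. \<Sum>k\<le>N. cis (- (T * lam k)) * complex_of_real (spec_part k i * eigvec l i))"
      by (intro sum.cong) (auto simp: evol_ebasis0 sum_distrib_left sum_distrib_right algebra_simps)
    also have "\<dots> = (\<Sum>k\<le>N. cis (- (T * lam k)) * complex_of_real (\<Sum>i\<le>N. spec_part k i * eigvec l i))"
      by (subst sum.swap) (simp add: sum_distrib_left)
    also have "\<dots> = cis (- (T * lam l)) * eigvec l 0"
      using l by (simp add: sum_spec_part_mult_eigvec if_distrib[of complex_of_real]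
          if_distrib[of "(*) _"] cong: if_cong)
    finally show ?thesis ..
  qed
  then show ?thesis by blast
qed

lemma eigval_gap_nonzero: "k \<le> N \<Longrightarrow> eigval_gap k \<noteq> 0"
  using spec_part_last_mult_gap offdiag_prod_pos by fastforce

lemma PST_at_mirror:
  assumes "PST_at N J T" "l \<le> N"
  shows "eigvec l N = sgn (eigval_gap l) * eigvec l 0"
proof (rule eq_sgn_mult_if_abs_eq)
  obtain \<phi> where "cis (- (T * lam l)) * eigvec l 0 = exp (\<i> * complex_of_real \<phi>) * eigvec l N"
    using PST_at_eigvec[OF assms(1)] assms(2) by blast
  then have "norm (cis (- (T * lam l)) * eigvec l 0) = norm (exp (\<i> * complex_of_real \<phi>) * eigvec l N)"
    by simp
  then show "\<bar>eigvec l N\<bar> = \<bar>eigvec l 0\<bar>" by (simp add: norm_mult)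
  have "0 < spec_part l N * eigval_gap l"
    using spec_part_last_mult_gap[OF assms(2)] offdiag_prod_pos by simp
  then show "0 < eigvec l 0 * eigvec l N * eigval_gap l"
    using eigvec_sqnorm_pos[OF assms(2)] unfolding spec_part_def
    by (simp add: zero_less_mult_iff zero_less_divide_iff)
qed

lemma PST_at_weight:
  assumes "PST_at N J T" "k \<le> N"
  shows "spec_part k 0 = offdiag_prod / \<bar>eigval_gap k\<bar>"
proof -
  have "spec_part k N = sgn (eigval_gap k) * spec_part k 0"
    using PST_at_mirror[OF assms] unfolding spec_part_def by simp
  then have "\<bar>eigval_gap k\<bar> * spec_part k 0 = offdiag_prod"
    using spec_part_last_mult_gap[OF assms(2)] by (simp add: abs_sgn algebra_simps)
  then show ?thesis using eigval_gap_nonzero[OF assms(2)] by (simp add: field_simps)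
qed

lemma PST_at_phases:
  assumes "PST_at N J T"
  shows "\<exists>\<phi>. \<forall>k\<le>N. cis (- (T * lam k)) = exp (\<i> * complex_of_real \<phi>) * sgn (eigval_gap k)"
proof -
  obtain \<phi> where \<phi>: "\<And>k. k \<le> N \<Longrightarrow> cis (- (T * lam k)) * eigvec k 0 = exp (\<i> * complex_of_real \<phi>) * eigvec k N"
    using PST_at_eigvec[OF assms] by blast
  have "cis (- (T * lam k)) = exp (\<i> * complex_of_real \<phi>) * sgn (eigval_gap k)" if k: "k \<le> N" for k
  proof -
    have "0 < spec_part k 0"
      using PST_at_weight[OF assms k] offdiag_prod_pos eigval_gap_nonzero[OF k] by simp
    then have "eigvec k 0 \<noteq> 0" unfolding spec_part_def by auto
    moreover have "cis (- (T * lam k)) * eigvec k 0 = exp (\<i> * complex_of_real \<phi>) * sgn (eigval_gap k) * eigvec k 0"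
      using \<phi>[OF k] PST_at_mirror[OF assms k] by simp
    ultimately show ?thesis by simp
  qed
  then show ?thesis by blast
qed

lemma return_amplitude:
  "cinner N (evol N J t (ebasis 0)) (ebasis 0) = (\<Sum>k\<le>N. complex_of_real (spec_part k 0) * cis (- (t * lam k)))"
  by (simp add: cinner_ebasis evol_ebasis0)

lemma PST_at_cong:
  assumes "PST_at N J T" "0 < T'" "\<And>k. k \<le> N \<Longrightarrow> cis (- (T' * lam k)) = cis (- (T * lam k))"
  shows "PST_at N J T'"
proof -
  have "evol N J T' (ebasis 0) i = evol N J T (ebasis 0) i" if "i \<le> N" for i
    using assms(3) that by (simp add: evol_ebasis0)
  then show ?thesis using assms(1,2) unfolding PST_at_def by simp
qed

end

section \<open>The spectrum \<open>{0, \<plusminus>1, \<plusminus>n, \<plusminus>(n + 1)}\<close> for even \<open>n\<close>\<close>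

definition spectrum_list :: "nat \<Rightarrow> real list" where
  "spectrum_list n = [0, 1, -1, real n, - real n, real n + 1, - (real n + 1)]"

lemma atMost_6: "{..6::nat} = {0, 1, 2, 3, 4, 5, 6}"
  by auto

lemma sum_atMost_6: "(\<Sum>k\<le>6::nat. f k) = f 0 + f 1 + f 2 + f 3 + f 4 + f 5 + f 6"
  by (simp add: atMost_6 add.assoc)

lemma distinct_spectrum_list: "2 \<le> n \<Longrightarrow> distinct (spectrum_list n)"
  unfolding spectrum_list_def by auto

lemma spectrum_list_Ints: "k \<le> 6 \<Longrightarrow> spectrum_list n ! k \<in> \<int>"
  using atMost_6 unfolding spectrum_list_def by (auto simp: atMost_iff[symmetric] simp del: atMost_iff)

locale jacobi_even_spectrum = jacobi_simple_spectrum 6 a b "\<lambda>k. spectrum_list n ! k"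
  for n :: nat and a b :: "nat \<Rightarrow> real" +
  assumes even: "even n" and two_le: "2 \<le> n"
begin

abbreviation A :: real where "A \<equiv> real n"
abbreviation B :: real where "B \<equiv> real n + 1"

lemma squares_bounds: "0 < A^2 - 1" "0 < B^2 - 1" "0 < B^2 - A^2"
proof -
  have "2 * 2 \<le> A * A" using two_le by (intro mult_mono) auto
  then show "0 < A^2 - 1" by (simp add: power2_eq_square)
  show "0 < B^2 - A^2" by (simp add: power2_eq_square algebra_simps)
  then show "0 < B^2 - 1" using \<open>0 < A^2 - 1\<close> by linarith
qed

lemma eigval_gap_values:
  "eigval_gap 0 = - (A^2 * B^2)" "eigval_gap 1 = 2 * (A^2 - 1) * (B^2 - 1)"
  "eigval_gap 2 = 2 * (A^2 - 1) * (B^2 - 1)"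
  "eigval_gap 3 = - (2 * A^2 * (A^2 - 1) * (B^2 - A^2))" "eigval_gap 4 = - (2 * A^2 * (A^2 - 1) * (B^2 - A^2))"
  "eigval_gap 5 = 2 * B^2 * (B^2 - 1) * (B^2 - A^2)" "eigval_gap 6 = 2 * B^2 * (B^2 - 1) * (B^2 - A^2)"
  unfolding eigval_gap_def atMost_6
  by (simp_all add: insert_Diff_if spectrum_list_def algebra_simps power2_eq_square)

lemma abs_eigval_gap_values:
  "\<bar>eigval_gap 0\<bar> = A^2 * B^2"
  "\<bar>eigval_gap 1\<bar> = 2 * (A^2 - 1) * (B^2 - 1)" "\<bar>eigval_gap 2\<bar> = 2 * (A^2 - 1) * (B^2 - 1)"
  "\<bar>eigval_gap 3\<bar> = 2 * A^2 * (A^2 - 1) * (B^2 - A^2)" "\<bar>eigval_gap 4\<bar> = 2 * A^2 * (A^2 - 1) * (B^2 - A^2)"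
  "\<bar>eigval_gap 5\<bar> = 2 * B^2 * (B^2 - 1) * (B^2 - A^2)" "\<bar>eigval_gap 6\<bar> = 2 * B^2 * (B^2 - 1) * (B^2 - A^2)"
  unfolding eigval_gap_values using squares_bounds by (simp_all only: abs_minus_cancel abs_mult abs_of_pos
    abs_power2 zero_less_numeral abs_numeral)

lemma eigval_gap_signs: "eigval_gap 3 < 0" "0 < eigval_gap 5"
  unfolding eigval_gap_values using squares_bounds two_le by simp_all

text \<open>At a PST time the phases of the eigenvalues \<open>n\<close> and \<open>n + 1\<close> differ by a sign, hence
  \<open>cis (- T) = -1\<close>; as the spectrum is integral, the evolution at \<open>T\<close> then agrees with that at \<open>pi\<close>.\<close>

lemma PST_at_pi:
  assumes "PST_at 6 J T"
  shows "PST_at 6 J pi"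
proof (rule PST_at_cong[OF assms pi_gt_zero])
  obtain \<phi> where \<phi>: "\<And>k. k \<le> 6 \<Longrightarrow> cis (- (T * spectrum_list n ! k)) = exp (\<i> * complex_of_real \<phi>) * sgn (eigval_gap k)"
    using PST_at_phases[OF assms] by blast
  have "cis (- (T * spectrum_list n ! 5)) = cis (- T) * cis (- (T * spectrum_list n ! 3))"
    unfolding cis_mult by (simp add: spectrum_list_def algebra_simps)
  then have "(- cis (- T)) * exp (\<i> * complex_of_real \<phi>) = exp (\<i> * complex_of_real \<phi>)"
    using \<phi>[of 5] \<phi>[of 3] eigval_gap_signs by simp
  then have "cis (- T) = -1" by (metis exp_not_eq_zero mult_cancel_right2 minus_equation_iff)
  then have "cis (- T) = cis (- pi)" by (simp add: complex_eq_iff)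
  then show "cis (- (pi * spectrum_list n ! k)) = cis (- (T * spectrum_list n ! k))" if "k \<le> 6" for k
    using cis_int_mult_cong[OF _ spectrum_list_Ints[OF that], of "- pi" "- T" n] by simp
qed

lemma weighted_cos_sum_eq:
  "(\<Sum>k\<le>6. cos (\<tau> * spectrum_list n ! k) / \<bar>eigval_gap k\<bar>)
    = ((A^2 - 1) * (B^2 - 1) * (B^2 - A^2) + A^2 * B^2 * (B^2 - A^2) * cos \<tau>
        + B^2 * (B^2 - 1) * cos (A * \<tau>) + A^2 * (A^2 - 1) * cos (B * \<tau>))
      / (A^2 * B^2 * (A^2 - 1) * (B^2 - 1) * (B^2 - A^2))"
proof -
  define x y where "x = A^2" "y = B^2"
  have xy: "1 < x" "x < y" using squares_bounds unfolding x_y_def by simp_all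
  have partial_fractions: "1 / (x * y) + p / (2 * a * b) + p / (2 * a * b)
      + q / (2 * x * a * c) + q / (2 * x * a * c) + r / (2 * y * b * c) + r / (2 * y * b * c)
      = (a * b * c + x * y * c * p + y * b * q + x * a * r) / (x * y * a * b * c)"
    if "a \<noteq> 0" "b \<noteq> 0" "c \<noteq> 0" for a b c p q r :: real
    using that xy by (simp add: field_simps)
  have "cos (\<tau> * spectrum_list n ! 0) = 1" "cos (\<tau> * spectrum_list n ! 1) = cos \<tau>"
    "cos (\<tau> * spectrum_list n ! 2) = cos \<tau>" "cos (\<tau> * spectrum_list n ! 3) = cos (A * \<tau>)"
    "cos (\<tau> * spectrum_list n ! 4) = cos (A * \<tau>)" "cos (\<tau> * spectrum_list n ! 5) = cos (B * \<tau>)"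
    "cos (\<tau> * spectrum_list n ! 6) = cos (B * \<tau>)"
    unfolding spectrum_list_def
    by (simp_all add: mult.commute) (subst cos_minus[symmetric], simp add: algebra_simps)
  then have "(\<Sum>k\<le>6. cos (\<tau> * spectrum_list n ! k) / \<bar>eigval_gap k\<bar>)
      = 1 / (x * y) + cos \<tau> / (2 * (x - 1) * (y - 1)) + cos \<tau> / (2 * (x - 1) * (y - 1))
        + cos (A * \<tau>) / (2 * x * (x - 1) * (y - x)) + cos (A * \<tau>) / (2 * x * (x - 1) * (y - x))
        + cos (B * \<tau>) / (2 * y * (y - 1) * (y - x)) + cos (B * \<tau>) / (2 * y * (y - 1) * (y - x))"
    unfolding sum_atMost_6 abs_eigval_gap_values x_y_def by (simp only:)
  also have "\<dots> = ((x - 1) * (y - 1) * (y - x) + x * y * (y - x) * cos \<tau>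
        + y * (y - 1) * cos (A * \<tau>) + x * (x - 1) * cos (B * \<tau>)) / (x * y * (x - 1) * (y - 1) * (y - x))"
    by (rule partial_fractions) (use xy in auto)
  finally show ?thesis unfolding x_y_def .
qed

lemma weighted_cos_sum_pos:
  assumes "0 < \<tau>" "\<tau> < pi"
  shows "0 < (\<Sum>k\<le>6. cos (\<tau> * spectrum_list n ! k) / \<bar>eigval_gap k\<bar>)"
  unfolding weighted_cos_sum_eq using even_cos_poly_pos[OF even two_le assms] squares_bounds two_le
  by (intro divide_pos_pos mult_pos_pos) auto

lemma return_amplitude_pos:
  assumes "PST_at 6 J T" "0 < \<tau>" "\<tau> < pi"
  shows "0 < Re (cinner 6 (evol 6 J \<tau> (ebasis 0)) (ebasis 0))"
proof -
  have "Re (cinner 6 (evol 6 J \<tau> (ebasis 0)) (ebasis 0))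
      = offdiag_prod * (\<Sum>k\<le>6. cos (\<tau> * spectrum_list n ! k) / \<bar>eigval_gap k\<bar>)"
    unfolding return_amplitude Re_sum sum_distrib_left
    by (intro sum.cong) (simp_all add: PST_at_weight[OF assms(1)])
  then show ?thesis using weighted_cos_sum_pos[OF assms(2,3)] offdiag_prod_pos by simp
qed

end

theorem theorem3p2:
  fixes m :: nat and a b :: "nat \<Rightarrow> real"
  assumes "m \<ge> 1"
    and "is_jacobi_params 6 a b"
    and "realizes_PST 6 (jacobi_mat 6 a b)"
    and "mat_spectrum 6 (jacobi_mat 6 a b) =
           {0, 1, -1, of_nat (2*m), - of_nat (2*m), of_nat (2*m+1), - of_nat (2*m+1)}"
  shows "\<not> exhibits_ESE 6 (jacobi_mat 6 a b)"
proof
  assume "exhibits_ESE 6 (jacobi_mat 6 a b)"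
  then obtain T \<tau> where PST: "PST_at 6 (jacobi_mat 6 a b) T"
    and first: "\<forall>t. 0 < t \<and> t < T \<longrightarrow> \<not> PST_at 6 (jacobi_mat 6 a b) t"
    and \<tau>: "0 < \<tau>" "\<tau> < T" and excluded: "cinner 6 (evol 6 (jacobi_mat 6 a b) \<tau> (ebasis 0)) (ebasis 0) = 0"
    unfolding exhibits_ESE_def by blast
  interpret jacobi_even_spectrum "2 * m" a b
  proof
    show "0 < b i" if "i < 6" for i using assms(2) that unfolding is_jacobi_params_def by blast
    show "inj_on (\<lambda>k. spectrum_list (2 * m) ! k) {..6}"
      using distinct_spectrum_list[of "2 * m"] assms(1) by (intro inj_on_nth) (auto simp: spectrum_list_def)
    show "complex_of_real (spectrum_list (2 * m) ! k) \<in> mat_spectrum 6 (jacobi_mat 6 a b)" if "k \<le> 6" for k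
    proof -
      have "k \<in> {0, 1, 2, 3, 4, 5, 6}" using that atMost_6 by blast
      then show ?thesis unfolding assms(4) by (auto simp: spectrum_list_def)
    qed
  qed (use assms(1) in auto)
  have "T \<le> pi" using first PST_at_pi[OF PST] pi_gt_zero by (meson not_le)
  then have "0 < Re (cinner 6 (evol 6 (jacobi_mat 6 a b) \<tau> (ebasis 0)) (ebasis 0))"
    using return_amplitude_pos[OF PST \<tau>(1)] \<tau>(2) by simp
  then show False using excluded by simp
qed

end
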